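(* Let $S_X,S_Y$ be finite nonempty action sets, $\lambda\in[0,1)$, and let $\varphi:S_X\times S_Y\to\mathbb{R}$ be additive. If $\varphi\equiv0$ is $\lambda$-enforceable by $X$, then $\varphi\equiv0$ is $\lambda$-enforceable by $X$ using a reactive strategy, i.e., there exist $\sigma_X^0\in\Delta(S_X)$ and $\sigma_X:S_Y\to\Delta(S_X)$ such that the reactive strategy $(\sigma_X^0,\sigma_X)$ is $(\varphi,\lambda)$-autocratic.
   Context: Two players $X,Y$ play a repeated game with finite action sets $S_X,S_Y$; $\Delta(S)$ denotes the probability distributions on $S$. $\varphi$ is additive if there are $\phi_X:S_X\to\mathbb{R}$ and $\phi_Y:S_Y\to\mathbb{R}$ with $\varphi(s_X,s_Y)=\phi_X(s_X)+\phi_Y(s_Y)$ for all $s_X,s_Y$. Histories: $\mathcal{H}=\bigcup_{T\ge0}(S_X\times S_Y)^T$. A behavioral strategy for $X$ is a map $\sigma_X:\mathcal{H}\to\Delta(S_X)$, similarly for $Y$; in each round $t$ players independently draw actions from their strategies evaluated at the history of realized action pairs of rounds $0,\dots,t-1$, and $\mathbb{E}_{\sigma_X,\sigma_Y}$ is the expectation over the resulting play. For $\lambda\in[0,1)$, $\sigma_X$ is $(\varphi,\lambda)$-autocratic if for every behavioral strategy $\sigma_Y$ of $Y$, $\mathbb{E}_{\sigma_X,\sigma_Y}\big[(1-\lambda)\sum_{t\ge0}\lambda^t\varphi(s_X^t,s_Y^t)\big]=0$; $\varphi\equiv0$ is $\lambda$-enforceable by $X$ if a $(\varphi,\lambda)$-autocratic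 behavioral strategy for $X$ exists. A reactive strategy $(\sigma_X^0,\sigma_X)$ with $\sigma_X^0\in\Delta(S_X)$, $\sigma_X:S_Y\to\Delta(S_X)$ plays the mixed action $\sigma_X^0$ in round $0$ and $\sigma_X[s_Y^t]$ in round $t+1$, where $s_Y^t$ is $Y$'s realized action in round $t$. *)

theory Defs
  imports "HOL-Probability.Probability"
begin

text \<open>Action sets are the finite (nonempty) types 'a (for X) and 'b (for Y).
  Mixed actions are pmfs. A history is the list of realized action pairs in
  chronological order (round 0 first).\<close>

type_synonym ('a, 'b) history = "('a \<times> 'b) list"

definition additive :: "('a \<Rightarrow> 'b \<Rightarrow> real) \<Rightarrow> bool" where
  "additive \<phi> \<longleftrightarrow> (\<exists>\<phi>X \<phi>Y. \<forall>x y. \<phi> x y = \<phi>X x + \<phi>Y y)"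

primrec hist_dist ::
  "(('a, 'b) history \<Rightarrow> 'a pmf) \<Rightarrow> (('a, 'b) history \<Rightarrow> 'b pmf) \<Rightarrow> nat \<Rightarrow> ('a, 'b) history pmf" where
  "hist_dist \<sigma>X \<sigma>Y 0 = return_pmf []"
| "hist_dist \<sigma>X \<sigma>Y (Suc t) =
     bind_pmf (hist_dist \<sigma>X \<sigma>Y t) (\<lambda>h. map_pmf (\<lambda>s. h @ [s]) (pair_pmf (\<sigma>X h) (\<sigma>Y h)))"

definition round_dist ::
  "(('a, 'b) history \<Rightarrow> 'a pmf) \<Rightarrow> (('a, 'b) history \<Rightarrow> 'b pmf) \<Rightarrow> nat \<Rightarrow> ('a \<times> 'b) pmf" where
  "round_dist \<sigma>X \<sigma>Y t = bind_pmf (hist_dist \<sigma>X \<sigma>Y t) (\<lambda>h. pair_pmf (\<sigma>X h) (\<sigma>Y h))"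

text \<open>Expected normalized discounted payoff
  E[(1-\<lambda>) \<Sum>_t \<lambda>^t \<phi>(s_X^t, s_Y^t)]; since \<phi> is bounded (finite action sets),
  by dominated convergence this equals the discounted series of per-round expectations.\<close>
definition disc_value ::
  "('a \<Rightarrow> 'b \<Rightarrow> real) \<Rightarrow> real \<Rightarrow> (('a, 'b) history \<Rightarrow> 'a pmf) \<Rightarrow> (('a, 'b) history \<Rightarrow> 'b pmf) \<Rightarrow> real" where
  "disc_value \<phi> lam \<sigma>X \<sigma>Y =
     (1 - lam) * (\<Sum>t. lam ^ t * measure_pmf.expectation (round_dist \<sigma>X \<sigma>Y t) (\<lambda>(x, y). \<phi> x y))"

definition autocratic ::
  "('a \<Rightarrow> 'b \<Rightarrow> real) \<Rightarrow> real \<Rightarrow> (('a, 'b) history \<Rightarrow> 'a pmf) \<Rightarrow> bool" where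
  "autocratic \<phi> lam \<sigma>X \<longleftrightarrow> (\<forall>\<sigma>Y. disc_value \<phi> lam \<sigma>X \<sigma>Y = 0)"

definition enforceable :: "('a \<Rightarrow> 'b \<Rightarrow> real) \<Rightarrow> real \<Rightarrow> bool" where
  "enforceable \<phi> lam \<longleftrightarrow> (\<exists>\<sigma>X. autocratic \<phi> lam \<sigma>X)"

definition reactive :: "'a pmf \<Rightarrow> ('b \<Rightarrow> 'a pmf) \<Rightarrow> ('a, 'b) history \<Rightarrow> 'a pmf" where
  "reactive \<sigma>0 \<sigma> h = (if h = [] then \<sigma>0 else \<sigma> (snd (last h)))"

end

theory Submission
  imports Defs
begin

text \<open>Write \<phi> = \<phi>X + \<phi>Y and let P be the expected \<phi>X under X's round-0 action.  Against the
  constant reply y, the value of an autocratic strategy splits as (1 - \<lambda>) P + \<lambda> v(y) + \<phi>Y(y) = 0,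
  where v(y) is the normalized discounted mean of X's expected \<phi>X from round 1 on.  Being an
  average of values of \<phi>X, v(y) is the expected \<phi>X of some mixed action \<sigma>(y).  The reactive
  strategy that opens with X's round-0 action and answers y by \<sigma>(y) then satisfies, against
  every strategy of Y and in every round t, \<lambda> E \<phi>X(s_X^(t+1)) + E \<phi>Y(s_Y^t) = -(1 - \<lambda>) P;
  taking discounted means of this identity shows that its value is 0.\<close>

definition discounted_mean :: "real \<Rightarrow> (nat \<Rightarrow> real) \<Rightarrow> real" where
  "discounted_mean lam a = (1 - lam) * (\<Sum>t. lam ^ t * a t)"

lemma summable_geometric_times_Bseq:
  fixes lam :: real
  assumes "\<bar>lam\<bar> < 1" and "Bseq a"
  shows "summable (\<lambda>t. lam ^ t * a t)"
proof -
  obtain K where K: "\<And>t. \<bar>a t\<bar> \<le> K"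
    using \<open>Bseq a\<close> unfolding Bseq_def by auto
  have "norm (lam ^ t * a t) \<le> K * \<bar>lam\<bar> ^ t" for t
    using K[of t] by (simp add: abs_mult power_abs mult.commute mult_right_mono)
  moreover have "summable (\<lambda>t. K * \<bar>lam\<bar> ^ t)"
    using assms(1) by (intro summable_mult summable_geometric) simp
  ultimately show ?thesis
    by (blast intro: summable_comparison_test')
qed

lemma discounted_mean_const:
  assumes "\<bar>lam\<bar> < 1"
  shows "discounted_mean lam (\<lambda>_. c) = c"
proof -
  have "(\<Sum>t. lam ^ t * c) = c / (1 - lam)"
    using assms by (simp add: suminf_mult2[symmetric] suminf_geometric divide_simps)
  then show ?thesis
    using assms by (simp add: discounted_mean_def)
qed

lemma discounted_mean_add:
  assumes "\<bar>lam\<bar> < 1" and "Bseq a" and "Bseq b"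
  shows "discounted_mean lam (\<lambda>t. a t + b t) = discounted_mean lam a + discounted_mean lam b"
  using suminf_add[OF summable_geometric_times_Bseq[OF assms(1,2)]
      summable_geometric_times_Bseq[OF assms(1,3)], symmetric]
  by (simp add: discounted_mean_def distrib_left)

lemma discounted_mean_cmult:
  assumes "\<bar>lam\<bar> < 1" and "Bseq a"
  shows "discounted_mean lam (\<lambda>t. c * a t) = c * discounted_mean lam a"
  using suminf_mult[OF summable_geometric_times_Bseq[OF assms], of c]
  by (simp add: discounted_mean_def mult.left_commute)

lemma discounted_mean_Suc:
  assumes "\<bar>lam\<bar> < 1" and "Bseq a"
  shows "discounted_mean lam a = (1 - lam) * a 0 + lam * discounted_mean lam (\<lambda>t. a (Suc t))"
proof -
  have "Bseq (\<lambda>t. a (Suc t))"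
    using \<open>Bseq a\<close> by (simp add: Bseq_Suc_iff)
  from suminf_mult[OF summable_geometric_times_Bseq[OF assms(1) this], of lam]
  have "(\<Sum>t. lam ^ Suc t * a (Suc t)) = lam * (\<Sum>t. lam ^ t * a (Suc t))"
    by (simp add: mult.assoc)
  moreover have "(\<Sum>t. lam ^ Suc t * a (Suc t)) = (\<Sum>t. lam ^ t * a t) - a 0"
    using suminf_split_head[OF summable_geometric_times_Bseq[OF assms]] by simp
  ultimately have "(\<Sum>t. lam ^ t * a t) = a 0 + lam * (\<Sum>t. lam ^ t * a (Suc t))"
    by simp
  then show ?thesis
    unfolding discounted_mean_def by (simp add: algebra_simps)
qed

lemma discounted_mean_mono:
  assumes "0 \<le> lam" "lam < 1" and "Bseq a" "Bseq b" and "\<And>t. a t \<le> b t"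
  shows "discounted_mean lam a \<le> discounted_mean lam b"
proof -
  have "(\<Sum>t. lam ^ t * a t) \<le> (\<Sum>t. lam ^ t * b t)"
    using assms by (intro suminf_le summable_geometric_times_Bseq mult_left_mono) auto
  then show ?thesis
    using assms(2) by (simp add: discounted_mean_def)
qed

lemma discounted_mean_in_bounds:
  assumes "0 \<le> lam" "lam < 1" and "\<And>t. a t \<in> {m..M}"
  shows "discounted_mean lam a \<in> {m..M}"
proof -
  have a: "Bseq a"
    using assms(3) by (intro Limits.Bseq_eq_bounded[of a m M]) blast
  have "discounted_mean lam (\<lambda>_. m) \<le> discounted_mean lam a"
    "discounted_mean lam a \<le> discounted_mean lam (\<lambda>_. M)"
    using assms by (intro discounted_mean_mono a; simp)+
  then show ?thesis
    using assms(1,2) by (simp add: discounted_mean_const)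
qed

lemma expectation_in_range_finite:
  fixes p :: "'c::finite pmf" and f :: "'c \<Rightarrow> real"
  shows "measure_pmf.expectation p f \<in> {Min (range f)..Max (range f)}"
proof -
  have "integrable (measure_pmf p) f"
    by (rule integrable_measure_pmf_finite) simp
  then show ?thesis
    by (auto intro: measure_pmf.integral_ge_const measure_pmf.integral_le_const)
qed

lemma Bseq_expectation_finite:
  fixes p :: "nat \<Rightarrow> 'c::finite pmf" and f :: "'c \<Rightarrow> real"
  shows "Bseq (\<lambda>t. measure_pmf.expectation (p t) f)"
  using expectation_in_range_finite by (intro Limits.Bseq_eq_bounded) (auto simp: image_subset_iff)

lemma expectation_bind_pmf_finite:
  fixes p :: "'c::finite pmf" and q :: "'c \<Rightarrow> 'd::finite pmf" and f :: "'d \<Rightarrow> real"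
  shows "measure_pmf.expectation (bind_pmf p q) f =
    measure_pmf.expectation p (\<lambda>x. measure_pmf.expectation (q x) f)"
  by (subst pmf_expectation_bind[of UNIV]) (auto simp: integral_measure_pmf[of UNIV])

lemma expectation_additive_pair_finite:
  fixes p :: "('c::finite \<times> 'd::finite) pmf" and f :: "'c \<Rightarrow> real" and g :: "'d \<Rightarrow> real"
  shows "measure_pmf.expectation p (\<lambda>(x, y). f x + g y) =
    measure_pmf.expectation (map_pmf fst p) f + measure_pmf.expectation (map_pmf snd p) g"
proof -
  have "measure_pmf.expectation p (\<lambda>(x, y). f x + g y) =
      measure_pmf.expectation p (\<lambda>s. f (fst s) + g (snd s))"
    by (simp only: case_prod_beta')
  also have "\<dots> =
      measure_pmf.expectation p (\<lambda>s. f (fst s)) + measure_pmf.expectation p (\<lambda>s. g (snd s))"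
    by (rule Bochner_Integration.integral_add) (simp_all add: integrable_measure_pmf_finite)
  finally show ?thesis
    by simp
qed

lemma exists_pmf_expectation_between:
  fixes f :: "'c \<Rightarrow> real"
  assumes "f x \<le> v" and "v \<le> f y"
  shows "\<exists>p. measure_pmf.expectation p f = v"
proof (cases "f x = f y")
  case True
  then show ?thesis
    using assms by (intro exI[of _ "return_pmf x"]) simp
next
  case False
  define q where "q = (v - f x) / (f y - f x)"
  have q: "0 \<le> q" "q \<le> 1"
    using assms False by (auto simp: q_def divide_simps)
  have "measure_pmf.expectation (map_pmf (\<lambda>b. if b then y else x) (bernoulli_pmf q)) f =
      q * f y + (1 - q) * f x"
    using q by (simp add: mult.commute)
  also have "\<dots> = v"
    using False by (simp add: q_def divide_simps) (simp add: algebra_simps)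
  finally show ?thesis
    by blast
qed

lemma exists_pmf_expectation_finite:
  fixes f :: "'c::finite \<Rightarrow> real"
  assumes "v \<in> {Min (range f)..Max (range f)}"
  shows "\<exists>p. measure_pmf.expectation p f = v"
proof -
  have "Min (range f) \<in> range f" "Max (range f) \<in> range f"
    by (simp_all add: Min_in Max_in)
  then obtain x y where "f x = Min (range f)" "f y = Max (range f)"
    by (metis rangeE)
  with assms show ?thesis
    by (intro exists_pmf_expectation_between[of f x v y]) auto
qed

lemma round_dist_0: "round_dist \<sigma>X \<sigma>Y 0 = pair_pmf (\<sigma>X []) (\<sigma>Y [])"
  by (simp add: round_dist_def bind_return_pmf)

lemma map_fst_round_dist_reactive_Suc:
  "map_pmf fst (round_dist (reactive \<sigma>0 \<sigma>) \<sigma>Y (Suc t)) =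
     bind_pmf (round_dist (reactive \<sigma>0 \<sigma>) \<sigma>Y t) (\<lambda>s. \<sigma> (snd s))"
  by (simp add: round_dist_def bind_assoc_pmf bind_map_pmf map_bind_pmf map_fst_pair_pmf reactive_def)

lemma map_snd_round_dist_const:
  "map_pmf snd (round_dist \<sigma>X (\<lambda>_. return_pmf y) t) = return_pmf y"
  by (simp add: round_dist_def map_bind_pmf map_snd_pair_pmf)

lemma disc_value_additive:
  fixes \<phi>X :: "'a::finite \<Rightarrow> real" and \<phi>Y :: "'b::finite \<Rightarrow> real"
  assumes "\<And>x y. \<phi> x y = \<phi>X x + \<phi>Y y" and "\<bar>lam\<bar> < 1"
  shows "disc_value \<phi> lam \<sigma>X \<sigma>Y =
    discounted_mean lam (\<lambda>t. measure_pmf.expectation (map_pmf fst (round_dist \<sigma>X \<sigma>Y t)) \<phi>X) +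
    discounted_mean lam (\<lambda>t. measure_pmf.expectation (map_pmf snd (round_dist \<sigma>X \<sigma>Y t)) \<phi>Y)"
  using assms
  by (simp add: disc_value_def discounted_mean_def[symmetric] expectation_additive_pair_finite
      discounted_mean_add Bseq_expectation_finite)

lemma autocratic_against_constant_reply:
  fixes \<phi>X :: "'a::finite \<Rightarrow> real" and \<phi>Y :: "'b::finite \<Rightarrow> real"
  assumes \<phi>: "\<And>x y. \<phi> x y = \<phi>X x + \<phi>Y y" and lam: "\<bar>lam\<bar> < 1"
    and "autocratic \<phi> lam \<sigma>X"
  shows "(1 - lam) * measure_pmf.expectation (\<sigma>X []) \<phi>X
    + lam * discounted_mean lam
        (\<lambda>t. measure_pmf.expectation (map_pmf fst (round_dist \<sigma>X (\<lambda>_. return_pmf y) (Suc t))) \<phi>X)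
    + \<phi>Y y = 0"
proof -
  define a where
    "a = (\<lambda>t. measure_pmf.expectation (map_pmf fst (round_dist \<sigma>X (\<lambda>_. return_pmf y) t)) \<phi>X)"
  have "0 = disc_value \<phi> lam \<sigma>X (\<lambda>_. return_pmf y)"
    using \<open>autocratic \<phi> lam \<sigma>X\<close> by (simp add: autocratic_def)
  also have "\<dots> = discounted_mean lam a + \<phi>Y y"
    using lam by (simp add: disc_value_additive[OF \<phi>] a_def map_snd_round_dist_const
        discounted_mean_const)
  also have "discounted_mean lam a = (1 - lam) * a 0 + lam * discounted_mean lam (\<lambda>t. a (Suc t))"
    unfolding a_def using lam by (intro discounted_mean_Suc Bseq_expectation_finite)
  finally show ?thesis
    by (simp add: a_def round_dist_0 map_fst_pair_pmf)
qed

lemma reactive_autocratic: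
  fixes \<phi>X :: "'a::finite \<Rightarrow> real" and \<phi>Y :: "'b::finite \<Rightarrow> real"
  assumes \<phi>: "\<And>x y. \<phi> x y = \<phi>X x + \<phi>Y y" and lam: "\<bar>lam\<bar> < 1"
    and \<sigma>: "\<And>y. (1 - lam) * measure_pmf.expectation \<sigma>0 \<phi>X
      + lam * measure_pmf.expectation (\<sigma> y) \<phi>X + \<phi>Y y = 0"
  shows "autocratic \<phi> lam (reactive \<sigma>0 \<sigma>)"
  unfolding autocratic_def
proof
  fix \<sigma>Y :: "('a, 'b) history \<Rightarrow> 'b pmf"
  define R where "R = round_dist (reactive \<sigma>0 \<sigma>) \<sigma>Y"
  define P where "P = measure_pmf.expectation \<sigma>0 \<phi>X"
  define a where "a = (\<lambda>t. measure_pmf.expectation (map_pmf fst (R t)) \<phi>X)"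
  define b where "b = (\<lambda>t. measure_pmf.expectation (map_pmf snd (R t)) \<phi>Y)"
  have a_Bseq: "Bseq a" and b_Bseq: "Bseq b"
    unfolding a_def b_def by (intro Bseq_expectation_finite)+
  have a_0: "a 0 = P"
    by (simp add: a_def R_def P_def round_dist_0 map_fst_pair_pmf reactive_def)
  have round_identity: "lam * a (Suc t) + b t = - (1 - lam) * P" for t
  proof -
    have "lam * a (Suc t) + b t =
        measure_pmf.expectation (R t) (\<lambda>s. lam * measure_pmf.expectation (\<sigma> (snd s)) \<phi>X + \<phi>Y (snd s))"
      unfolding a_def b_def R_def map_fst_round_dist_reactive_Suc
      by (simp add: expectation_bind_pmf_finite integrable_measure_pmf_finite)
    also have "\<dots> = - (1 - lam) * P"
    proof -
      have "lam * measure_pmf.expectation (\<sigma> y) \<phi>X + \<phi>Y y = - (1 - lam) * P" for y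
        using \<sigma>[of y] unfolding P_def by linarith
      then show ?thesis
        by simp
    qed
    finally show ?thesis .
  qed
  have "disc_value \<phi> lam (reactive \<sigma>0 \<sigma>) \<sigma>Y = discounted_mean lam a + discounted_mean lam b"
    by (simp add: disc_value_additive[OF \<phi> lam] a_def b_def R_def)
  also have "\<dots> = (1 - lam) * P + (lam * discounted_mean lam (\<lambda>t. a (Suc t)) + discounted_mean lam b)"
    by (simp add: discounted_mean_Suc[OF lam a_Bseq] a_0)
  also have "lam * discounted_mean lam (\<lambda>t. a (Suc t)) + discounted_mean lam b =
      discounted_mean lam (\<lambda>t. lam * a (Suc t) + b t)"
  proof -
    have a_Suc: "Bseq (\<lambda>t. a (Suc t))"
      using a_Bseq by (simp add: Bseq_Suc_iff)
    then have "Bseq (\<lambda>t. lam * a (Suc t))"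
      by (intro Bseq_mult) (simp_all add: Bseq_def)
    then show ?thesis
      by (simp add: discounted_mean_add[OF lam _ b_Bseq] discounted_mean_cmult[OF lam a_Suc])
  qed
  also have "\<dots> = - (1 - lam) * P"
    using lam by (simp add: round_identity discounted_mean_const)
  finally show "disc_value \<phi> lam (reactive \<sigma>0 \<sigma>) \<sigma>Y = 0"
    by (simp add: algebra_simps)
qed

theorem theorem2:
  fixes \<phi> :: "'a::finite \<Rightarrow> 'b::finite \<Rightarrow> real" and lam :: real
  assumes "0 \<le> lam" and "lam < 1"
    and "additive \<phi>"
    and "enforceable \<phi> lam"
  shows "\<exists>\<sigma>0 \<sigma>. autocratic \<phi> lam (reactive \<sigma>0 \<sigma>)"
proof -
  have lam: "\<bar>lam\<bar> < 1"
    using assms(1,2) by simp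
  obtain \<phi>X \<phi>Y where \<phi>: "\<And>x y. \<phi> x y = \<phi>X x + \<phi>Y y"
    using \<open>additive \<phi>\<close> unfolding additive_def by blast
  obtain \<sigma>X where "autocratic \<phi> lam \<sigma>X"
    using \<open>enforceable \<phi> lam\<close> unfolding enforceable_def by blast
  define v where "v y = discounted_mean lam
      (\<lambda>t. measure_pmf.expectation (map_pmf fst (round_dist \<sigma>X (\<lambda>_. return_pmf y) (Suc t))) \<phi>X)"
    for y
  have "v y \<in> {Min (range \<phi>X)..Max (range \<phi>X)}" for y
    unfolding v_def using assms(1,2) by (intro discounted_mean_in_bounds expectation_in_range_finite)
  then have "\<forall>y. \<exists>p. measure_pmf.expectation p \<phi>X = v y"
    by (blast intro: exists_pmf_expectation_finite)
  then obtain \<sigma> where \<sigma>: "\<And>y. measure_pmf.expectation (\<sigma> y) \<phi>X = v y"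
    by metis
  have "autocratic \<phi> lam (reactive (\<sigma>X []) \<sigma>)"
    using autocratic_against_constant_reply[OF \<phi> lam \<open>autocratic \<phi> lam \<sigma>X\<close>]
    by (intro reactive_autocratic[OF \<phi> lam]) (simp add: \<sigma> v_def)
  then show ?thesis
    by blast
qed

end
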